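(* Let $X$ be a finite dimensional real Hilbert space, let $g:X\to\mathbb{R}$ be a convex function (finite everywhere) with $\min_{x\in X}g(x)<0$, let $C:=\{x\in X:g(x)\leq0\}$, and let $\bar{x}\in X$. Consider the following iteration. Set $x_{0}=\bar{x}$ and let $H_{0}=\{x:\langle c_{0},x\rangle\leq b\}$ be a set of this form with $C\subset H_{0}$ (possibly $c_{0}=0$, $b=0$, i.e. $H_{0}=X$). For $k=0,1,2,\dots$: choose $s_{k}\in\partial g(x_{k})$, let $\tilde{C}_{k}=\{x:g(x_{k})+\langle x-x_{k},s_{k}\rangle\leq0\}$, let $x_{k+1}=P_{H_{k}\cap\tilde{C}_{k}}(\bar{x})$, and let $H_{k+1}$ be the halfspace such that $x_{k+1}=P_{H_{k+1}}(\bar{x})$, namely $H_{k+1}=\{x:\langle\bar{x}-x_{k+1},x-x_{k+1}\rangle\leq0\}$. Suppose that $g(x_{k})>0$ for all $k\geq0$ (so that $x_{k}\notin\tilde{C}_{k}$ and all iterates are defined). Let $v_{k}:=d(\bar{x},C)^{2}-\|\bar{x}-x_{k}\|^{2}$. Then $v_{k}$ converges to zero at a rate $O(1/k)$, i.e. there is a constant $M$ with $v_{k}\leq M/k$ for all $k\geq1$.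
   Context: $P_{S}(y)$ denotes the projection of $y$ onto a nonempty closed convex set $S$; $d(y,S)$ is the distance from $y$ to $S$; $\partial g(x)$ is the convex subdifferential. Note $v_k$ is twice the gap between the optimal value $\frac12 d(\bar x,C)^2$ of $\min_{x\in C}\frac12\|x-\bar x\|^2$ and the value $\frac12\|\bar x-x_k\|^2$ of the relaxed problem. *)

theory Defs
  imports "HOL-Analysis.Analysis"
begin

definition subdifferential :: "('a::real_inner \<Rightarrow> real) \<Rightarrow> 'a \<Rightarrow> 'a set" where
  "subdifferential g x = {s. \<forall>y. g y \<ge> g x + inner s (y - x)}"

end

theory Submission
  imports Defs
begin

text \<open>Every cut \<open>H\<^sub>k \<inter> C\<^sub>k\<close> contains \<open>C\<close>, so \<open>\<parallel>xbar - x\<^sub>k\<parallel> \<le> d(xbar, C)\<close> and the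
  gap \<open>v\<^sub>k\<close> is nonnegative. Since \<open>x\<^sub>k\<close> is the projection of \<open>xbar\<close> onto \<open>H\<^sub>k\<close> and
  \<open>x\<^sub>k\<^sub>+\<^sub>1 \<in> H\<^sub>k\<close>, Pythagoras gives \<open>v\<^sub>k - v\<^sub>k\<^sub>+\<^sub>1 \<ge> \<parallel>x\<^sub>k\<^sub>+\<^sub>1 - x\<^sub>k\<parallel>\<^sup>2\<close>. Conversely the gap is
  controlled by the step: a Slater point shows \<open>d(xbar, C) - \<parallel>xbar - x\<^sub>k\<parallel> = O(g(x\<^sub>k))\<close>,
  and \<open>x\<^sub>k\<^sub>+\<^sub>1 \<in> C\<^sub>k\<close> together with bounded subgradients gives
  \<open>g(x\<^sub>k) = O(\<parallel>x\<^sub>k\<^sub>+\<^sub>1 - x\<^sub>k\<parallel>)\<close>. Hence \<open>v\<^sub>k\<^sub>+\<^sub>1 \<le> v\<^sub>k - c v\<^sub>k\<^sup>2\<close>, and such sequences decay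
  like \<open>1/k\<close>.\<close>

lemma quadratic_decrease_rate:
  fixes v :: "nat \<Rightarrow> real" and c :: real
  assumes c: "c > 0" and nonneg: "\<And>k. v k \<ge> 0"
    and decrease: "\<And>k. k \<ge> 1 \<Longrightarrow> v (Suc k) \<le> v k - c * (v k)\<^sup>2"
    and k: "k \<ge> 1"
  shows "v k \<le> max (v 1) (1 / c) / real k"
  using k
proof (induction k rule: dec_induct)
  case base
  then show ?case by simp
next
  case (step k)
  define M where "M = max (v 1) (1 / c)"
  have k1: "real k \<ge> 1" using step.hyps by simp
  have "c * M \<ge> c * (1 / c)" unfolding M_def using c by (intro mult_left_mono) auto
  then have cM: "c * M \<ge> 1" using c by simp
  have v_mono: "v (Suc k) \<le> v k" using decrease[OF step.hyps(1)] c
    by (smt (verit) zero_le_power2 mult_nonneg_nonneg)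
  have "v (Suc k) \<le> M / (real k + 1)"
  proof (cases "v k \<le> M / (real k + 1)")
    case True
    then show ?thesis using v_mono by simp
  next
    case False
    have "c * v k \<ge> c * (M / (real k + 1))" using False c by (intro mult_left_mono) auto
    moreover have "c * (M / (real k + 1)) \<ge> 1 / (real k + 1)"
      using cM by (simp add: divide_right_mono)
    ultimately have "1 - c * v k \<le> real k / (real k + 1)" by (simp add: field_simps)
    then have "v k * (1 - c * v k) \<le> v k * (real k / (real k + 1))"
      using nonneg[of k] by (rule mult_left_mono)
    also have "\<dots> \<le> M / real k * (real k / (real k + 1))"
      using step.IH by (intro mult_right_mono) (simp_all add: M_def)
    also have "\<dots> = M / (real k + 1)" using k1 by (simp add: field_simps)
    finally have "v k - c * (v k)\<^sup>2 \<le> M / (real k + 1)"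
      by (simp add: algebra_simps power2_eq_square)
    then show ?thesis using decrease[OF step.hyps(1)] by simp
  qed
  then show ?case by (simp add: M_def add.commute)
qed

lemma linearization_eq_halfspace:
  "{y. a + inner (y - x) s \<le> 0} = {y. inner s y \<le> inner s x - a}"
  by (auto simp: inner_diff_left inner_commute algebra_simps)

lemma sublevel_subset_linearization:
  assumes "s \<in> subdifferential g x"
  shows "{y. g y \<le> 0} \<subseteq> {y. g x + inner (y - x) s \<le> 0}"
proof
  fix y assume "y \<in> {y. g y \<le> 0}"
  moreover have "g x + inner s (y - x) \<le> g y" using assms by (simp add: subdifferential_def)
  ultimately show "y \<in> {y. g x + inner (y - x) s \<le> 0}" by (simp add: inner_commute)
qed

lemma subdifferential_norm_le:
  assumes s: "s \<in> subdifferential g x" and bound: "\<And>y. dist x y \<le> 1 \<Longrightarrow> \<bar>g y\<bar> \<le> B"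
  shows "norm s \<le> 2 * B"
proof (cases "s = 0")
  case True
  then show ?thesis using bound[of x] by simp
next
  case False
  define y where "y = x + (1 / norm s) *\<^sub>R s"
  have dist_xy: "dist x y = 1" using False unfolding y_def by (simp add: dist_norm)
  have "inner s (y - x) = norm s"
    using False unfolding y_def by (simp add: dot_square_norm power2_eq_square)
  moreover have "g y \<ge> g x + inner s (y - x)" using s unfolding subdifferential_def by blast
  ultimately have "g y \<ge> g x + norm s" by simp
  then show ?thesis using dist_xy bound[of x] bound[of y] by simp
qed

text \<open>A point of the segment from \<open>y\<close> to the Slater point \<open>z\<close> lies in the sublevel set.\<close>

lemma infdist_sublevel_le:
  fixes g :: "'a::real_normed_vector \<Rightarrow> real"
  assumes conv: "convex_on UNIV g" and z: "g z < 0" and y: "g y > 0"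
  shows "infdist p {u. g u \<le> 0} \<le> dist p y + g y / (- g z) * dist y z"
proof -
  define t where "t = g y / (g y - g z)"
  have t01: "0 \<le> t" "t \<le> 1" unfolding t_def using y z by (auto simp: field_simps)
  have t_le: "t \<le> g y / (- g z)"
    unfolding t_def using y z by (intro divide_left_mono) (auto intro: mult_pos_neg)
  define w where "w = (1 - t) *\<^sub>R y + t *\<^sub>R z"
  have "g w \<le> (1 - t) * g y + t * g z"
    unfolding w_def by (rule convex_onD[OF conv t01]) auto
  also have "(1 - t) * g y + t * g z = 0" unfolding t_def using y z by (simp add: field_simps)
  finally have "w \<in> {u. g u \<le> 0}" by simp
  have "y - w = t *\<^sub>R (y - z)" unfolding w_def by (simp add: algebra_simps)
  then have dist_yw: "dist y w = t * dist y z" using t01 by (simp add: dist_norm)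
  have "infdist p {u. g u \<le> 0} \<le> dist p w" using \<open>w \<in> _\<close> by (rule infdist_le)
  also have "\<dots> \<le> dist p y + t * dist y z" using dist_triangle[of p w y] dist_yw by simp
  also have "\<dots> \<le> dist p y + g y / (- g z) * dist y z"
    using t_le by (intro add_left_mono mult_right_mono) auto
  finally show ?thesis .
qed

lemma norm_diff_sq_ge_halfspace:
  assumes "inner (a - x) (y - x) \<le> 0"
  shows "(norm (a - y))\<^sup>2 \<ge> (norm (a - x))\<^sup>2 + (norm (y - x))\<^sup>2"
proof -
  have "(a - x) - (y - x) = a - y" by simp
  then show ?thesis using assms dot_norm_neg[of "a - x" "y - x"] by simp
qed

locale halfspace_subgradient_projection =
  fixes g :: "'a::euclidean_space \<Rightarrow> real"
    and xbar c0 :: 'a and b :: real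
    and x s :: "nat \<Rightarrow> 'a" and H :: "nat \<Rightarrow> 'a set"
  assumes conv: "convex_on UNIV g"
    and minneg: "\<exists>z. (\<forall>y. g z \<le> g y) \<and> g z < 0"
    and H0: "H 0 = {y. inner c0 y \<le> b}"
    and CH0: "{y. g y \<le> 0} \<subseteq> H 0"
    and x0: "x 0 = xbar"
    and sub: "\<And>k. s k \<in> subdifferential g (x k)"
    and step: "\<And>k. x (Suc k) =
        closest_point (H k \<inter> {y. g (x k) + inner (y - x k) (s k) \<le> 0}) xbar"
    and Hstep: "\<And>k. H (Suc k) = {y. inner (xbar - x (Suc k)) (y - x (Suc k)) \<le> 0}"
    and pos: "\<And>k. g (x k) > 0"
begin

abbreviation C :: "'a set" where "C \<equiv> {y. g y \<le> 0}"

abbreviation cut :: "nat \<Rightarrow> 'a set" where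
  "cut k \<equiv> H k \<inter> {y. g (x k) + inner (y - x k) (s k) \<le> 0}"

abbreviation d :: real where "d \<equiv> infdist xbar C"

definition gap :: "nat \<Rightarrow> real" where
  "gap k = d\<^sup>2 - (norm (xbar - x k))\<^sup>2"

lemma closed_convex_H: "closed (H k) \<and> convex (H k)"
proof (cases k)
  case 0
  then show ?thesis using H0 closed_halfspace_le convex_halfspace_le by auto
next
  case (Suc j)
  have "H k = {y. inner (xbar - x k) y \<le> inner (xbar - x k) (x k)}"
    using Hstep[of j] Suc by (auto simp: inner_diff_right)
  then show ?thesis using closed_halfspace_le convex_halfspace_le by auto
qed

lemma closed_convex_cut: "closed (cut k) \<and> convex (cut k)"
  unfolding linearization_eq_halfspace using closed_convex_H[of k]
  by (simp add: closed_Int convex_Int closed_halfspace_le convex_halfspace_le)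

lemma sublevel_subset_H: "C \<subseteq> H k"
proof (induction k)
  case 0
  then show ?case using CH0 .
next
  case (Suc k)
  then have "C \<subseteq> cut k" using sublevel_subset_linearization[OF sub[of k]] by blast
  then show ?case
    unfolding Hstep using closest_point_dot[of "cut k" _ xbar] closed_convex_cut[of k] step[of k]
    by auto
qed

lemma sublevel_subset_cut: "C \<subseteq> cut k"
  using sublevel_subset_H[of k] sublevel_subset_linearization[OF sub[of k]] by blast

lemma slater_point: obtains z where "g z < 0"
  using minneg by blast

lemma sublevel_nonempty: "C \<noteq> {}"
  using slater_point by (metis empty_iff less_imp_le mem_Collect_eq)

lemma closed_sublevel: "closed C"
  using convex_on_continuous[OF open_UNIV conv] by (intro closed_Collect_le) auto

lemma x_Suc_in_cut: "x (Suc k) \<in> cut k"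
proof -
  have "cut k \<noteq> {}" using sublevel_subset_cut[of k] sublevel_nonempty by blast
  then show ?thesis
    using closest_point_in_set[of "cut k" xbar] closed_convex_cut[of k] step[of k] by simp
qed

lemma dist_iterate_le_infdist: "norm (xbar - x k) \<le> d"
proof (cases k)
  case 0
  then show ?thesis using x0 infdist_nonneg by simp
next
  case (Suc j)
  obtain p where p: "p \<in> C" "d = dist xbar p"
    using infdist_attains_inf[OF closed_sublevel sublevel_nonempty] .
  then have "dist xbar (closest_point (cut j) xbar) \<le> dist xbar p"
    using sublevel_subset_cut[of j] closed_convex_cut[of j] by (intro closest_point_le) auto
  then show ?thesis using Suc p step[of j] by (simp add: dist_norm)
qed

lemma gap_nonneg: "gap k \<ge> 0"
  unfolding gap_def using dist_iterate_le_infdist[of k] by (simp add: power_mono)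

lemma norm_iterate_le: "norm (x k) \<le> norm xbar + d"
  using norm_triangle_sub[of "x k" xbar] dist_iterate_le_infdist[of k]
  by (simp add: norm_minus_commute)

lemma subgradients_bounded: obtains L where "\<And>k. norm (s k) \<le> L"
proof -
  define R where "R = norm xbar + d + 1"
  have "compact (g ` cball 0 R)"
    using convex_on_continuous[OF open_UNIV conv]
    by (intro compact_continuous_image compact_cball) (auto intro: continuous_on_subset)
  then obtain B where B: "\<And>y. y \<in> cball 0 R \<Longrightarrow> \<bar>g y\<bar> \<le> B"
    using compact_imp_bounded bounded_real by (metis image_eqI)
  have "norm (s k) \<le> 2 * B" for k
  proof (rule subdifferential_norm_le[OF sub])
    fix y assume "dist (x k) y \<le> 1"
    then have "norm y \<le> R"
      using norm_iterate_le[of k] norm_triangle_sub[of y "x k"] unfolding R_def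
      by (simp add: dist_norm norm_minus_commute)
    then show "\<bar>g y\<bar> \<le> B" by (simp add: B)
  qed
  then show ?thesis using that by blast
qed

lemma value_le_step: "g (x k) \<le> norm (s k) * norm (x (Suc k) - x k)"
proof -
  have "g (x k) + inner (x (Suc k) - x k) (s k) \<le> 0" using x_Suc_in_cut[of k] by simp
  moreover have "\<bar>inner (x (Suc k) - x k) (s k)\<bar> \<le> norm (x (Suc k) - x k) * norm (s k)"
    by (rule Cauchy_Schwarz_ineq2)
  ultimately show ?thesis by (simp add: mult.commute)
qed

lemma gap_le_value: obtains Q where "Q \<ge> 0" "\<And>k. gap k \<le> Q * g (x k)"
proof -
  obtain z where z: "g z < 0" by (rule slater_point)
  define Q where "Q = (norm xbar + d + norm z) / (- g z)"
  have Q0: "Q \<ge> 0" unfolding Q_def using z infdist_nonneg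
    by (intro divide_nonneg_pos add_nonneg_nonneg) auto
  have "gap k \<le> 2 * d * Q * g (x k)" for k
  proof -
    let ?n = "norm (xbar - x k)"
    have "dist (x k) z \<le> norm xbar + d + norm z"
      using norm_iterate_le[of k] norm_triangle_ineq4[of "x k" z] by (simp add: dist_norm)
    then have "g (x k) / (- g z) * dist (x k) z \<le> g (x k) / (- g z) * (norm xbar + d + norm z)"
      using pos[of k] z by (intro mult_left_mono divide_nonneg_pos) auto
    also have "\<dots> = g (x k) * Q" unfolding Q_def by simp
    finally have "g (x k) / (- g z) * dist (x k) z \<le> g (x k) * Q" .
    then have d_le: "d - ?n \<le> g (x k) * Q"
      using infdist_sublevel_le[OF conv z pos[of k], of xbar] by (simp add: dist_norm)
    have "gap k = (d - ?n) * (d + ?n)" unfolding gap_def by (simp add: power2_eq_square algebra_simps)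
    also have "\<dots> \<le> (g (x k) * Q) * (d + ?n)"
      using d_le infdist_nonneg[of xbar C] by (intro mult_right_mono) auto
    also have "\<dots> \<le> (g (x k) * Q) * (2 * d)"
      using dist_iterate_le_infdist[of k] pos[of k] Q0 by (intro mult_left_mono) auto
    finally show ?thesis by (simp add: algebra_simps)
  qed
  moreover have "2 * d * Q \<ge> 0" using Q0 infdist_nonneg[of xbar C] by simp
  ultimately show ?thesis using that by blast
qed

lemma gap_le_step: obtains A where "A > 0" "\<And>k. gap k \<le> A * norm (x (Suc k) - x k)"
proof -
  obtain L where L: "\<And>k. norm (s k) \<le> L" using subgradients_bounded by blast
  obtain Q where Q: "Q \<ge> 0" "\<And>k. gap k \<le> Q * g (x k)" using gap_le_value by blast
  have "gap k \<le> (Q * L + 1) * norm (x (Suc k) - x k)" for k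
  proof -
    have "gap k \<le> Q * (norm (s k) * norm (x (Suc k) - x k))"
      using Q value_le_step[of k] by (meson mult_left_mono order_trans)
    also have "\<dots> \<le> Q * (L * norm (x (Suc k) - x k))"
      using Q L[of k] by (simp add: mult_left_mono mult_right_mono)
    finally have "gap k \<le> Q * L * norm (x (Suc k) - x k)" by (simp add: algebra_simps)
    then show ?thesis by (simp add: distrib_right add_increasing2)
  qed
  moreover have "Q * L + 1 > 0" using Q order_trans[OF norm_ge_zero L[of 0]] by (simp add: add_nonneg_pos)
  ultimately show ?thesis using that by blast
qed

lemma gap_decrease_by_step:
  assumes "k \<ge> 1"
  shows "gap (Suc k) \<le> gap k - (norm (x (Suc k) - x k))\<^sup>2"
proof -
  obtain j where j: "k = Suc j" using assms by (cases k) auto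
  have "x (Suc k) \<in> H k" using x_Suc_in_cut[of k] by simp
  then have "inner (xbar - x k) (x (Suc k) - x k) \<le> 0" using Hstep[of j] j by simp
  from norm_diff_sq_ge_halfspace[OF this] show ?thesis unfolding gap_def by linarith
qed

lemma gap_rate: obtains M where "\<And>k. k \<ge> 1 \<Longrightarrow> gap k \<le> M / real k"
proof -
  obtain A where A: "A > 0" "\<And>k. gap k \<le> A * norm (x (Suc k) - x k)" using gap_le_step by blast
  have "gap (Suc k) \<le> gap k - (1 / A\<^sup>2) * (gap k)\<^sup>2" if "k \<ge> 1" for k
  proof -
    have "(gap k)\<^sup>2 \<le> (A * norm (x (Suc k) - x k))\<^sup>2"
      using A(2)[of k] gap_nonneg[of k] by (rule power_mono)
    then have "(1 / A\<^sup>2) * (gap k)\<^sup>2 \<le> (norm (x (Suc k) - x k))\<^sup>2"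
      using A(1) by (simp add: field_simps power_mult_distrib)
    then show ?thesis using gap_decrease_by_step[OF that] by simp
  qed
  with A(1) gap_nonneg show ?thesis
    using quadratic_decrease_rate[of "1 / A\<^sup>2" gap] that by force
qed

end

theorem mainTheorem3:
  fixes g :: "'a::euclidean_space \<Rightarrow> real"
    and xbar c0 :: 'a and b :: real
    and x s :: "nat \<Rightarrow> 'a" and H :: "nat \<Rightarrow> 'a set"
  assumes conv: "convex_on UNIV g"
    and minneg: "\<exists>z. (\<forall>y. g z \<le> g y) \<and> g z < 0"
    and H0: "H 0 = {y. inner c0 y \<le> b}"
    and CH0: "{y. g y \<le> 0} \<subseteq> H 0"
    and x0: "x 0 = xbar"
    and sub: "\<And>k. s k \<in> subdifferential g (x k)"
    and step: "\<And>k. x (Suc k) =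
        closest_point (H k \<inter> {y. g (x k) + inner (y - x k) (s k) \<le> 0}) xbar"
    and Hstep: "\<And>k. H (Suc k) = {y. inner (xbar - x (Suc k)) (y - x (Suc k)) \<le> 0}"
    and pos: "\<And>k. g (x k) > 0"
  shows "\<exists>M. \<forall>k\<ge>1.
     (infdist xbar {y. g y \<le> 0})\<^sup>2 - (norm (xbar - x k))\<^sup>2 \<le> M / real k"
proof -
  interpret halfspace_subgradient_projection g xbar c0 b x s H
    using assms by unfold_locales
  obtain M where "\<And>k. k \<ge> 1 \<Longrightarrow> gap k \<le> M / real k" using gap_rate by blast
  then show ?thesis unfolding gap_def by blast
qed

end
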